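(* Let $\mathcal{G}$, $u$, $v$ be as in the context (finite bicoloured graph with a pure green path from $u$ to $v$), and let $e$ be a red edge whose weight $\omega(e)$ is a random variable with probability density function $f_e:(0,\infty)\to[0,\phi_e]$ for some $\phi_e>0$, independent of all other edge weights. Then for every $r\ge0$ and $\varepsilon\ge0$, $$\mathbb{P}\big(r<\Delta_e(r)\le r+\varepsilon\big)\le\phi_e\cdot\varepsilon .$$
   Context: $\mathcal{G}=\langle V,E,\omega,\lambda\rangle$ is a finite weighted coloured--edge graph (directed multigraph, weights $\omega:E\to\mathbb{R}^+$, colours $\lambda:E\to M$) with $M=\{\text{red},\text{green}\}$. A path from $u$ to $v$ is a sequence of consecutive edges from $u$ to $v$ visiting no vertex twice; $\omega_{\text{red}}(p)$, $\omega_{\text{green}}(p)$ denote the sums of weights of the red, resp. green, edges of $p$. It is assumed there is a path from $u$ to $v$ all of whose edges are green. For a red edge $e$ and $r\ge0$, define: $g_r$ is the least value of $\omega_{\text{green}}(p)$ over all paths $p$ from $u$ to $v$ not containing $e$ with $\omega_{\text{red}}(p)\le r$ (such paths exist, e.g. the pure green path, provided it avoids $e$, which it does since $e$ is red). Then $\Delta_e(r)$ is the least value of $\omega_{\text{red}}(q)$ over all paths $q$ from $u$ to $v$ that contain $e$ and satisfy $\omega_{\text{green}}(q)<g_r$; if there is no such path, $\Delta_e(r)=\infty$. (Thus $\Delta_e(r)$ is a random variable when edge weights are random.) *)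

theory Defs
  imports "HOL-Probability.Probability"
begin

datatype colour = Red | Green

text \<open>A directed multigraph: vertex set V, edge set E, each edge d goes from src d to tgt d.
  A path from u to v is a list of consecutive edges of E visiting no vertex twice.\<close>
definition is_path :: "'e set \<Rightarrow> ('e \<Rightarrow> 'v) \<Rightarrow> ('e \<Rightarrow> 'v) \<Rightarrow> 'v \<Rightarrow> 'v \<Rightarrow> 'e list \<Rightarrow> bool" where
  "is_path E src tgt u v p \<longleftrightarrow>
     set p \<subseteq> E \<and>
     (p = [] \<longrightarrow> u = v) \<and>
     (p \<noteq> [] \<longrightarrow> src (p ! 0) = u \<and> tgt (last p) = v) \<and>
     (\<forall>i. Suc i < length p \<longrightarrow> tgt (p ! i) = src (p ! Suc i)) \<and>
     distinct (u # map tgt p)"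

definition red_w :: "('e \<Rightarrow> colour) \<Rightarrow> ('e \<Rightarrow> real) \<Rightarrow> 'e list \<Rightarrow> real" where
  "red_w col w p = sum_list (map (\<lambda>d. if col d = Red then w d else 0) p)"

definition green_w :: "('e \<Rightarrow> colour) \<Rightarrow> ('e \<Rightarrow> real) \<Rightarrow> 'e list \<Rightarrow> real" where
  "green_w col w p = sum_list (map (\<lambda>d. if col d = Green then w d else 0) p)"

definition g_val :: "'e set \<Rightarrow> ('e \<Rightarrow> 'v) \<Rightarrow> ('e \<Rightarrow> 'v) \<Rightarrow> ('e \<Rightarrow> colour) \<Rightarrow> ('e \<Rightarrow> real)
    \<Rightarrow> 'v \<Rightarrow> 'v \<Rightarrow> 'e \<Rightarrow> real \<Rightarrow> real" where
  "g_val E src tgt col w u v e r =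
     Min {green_w col w p | p. is_path E src tgt u v p \<and> e \<notin> set p \<and> red_w col w p \<le> r}"

definition Delta :: "'e set \<Rightarrow> ('e \<Rightarrow> 'v) \<Rightarrow> ('e \<Rightarrow> 'v) \<Rightarrow> ('e \<Rightarrow> colour) \<Rightarrow> ('e \<Rightarrow> real)
    \<Rightarrow> 'v \<Rightarrow> 'v \<Rightarrow> 'e \<Rightarrow> real \<Rightarrow> ereal" where
  "Delta E src tgt col w u v e r =
     (let S = {red_w col w q | q. is_path E src tgt u v q \<and> e \<in> set q \<and>
                  green_w col w q < g_val E src tgt col w u v e r}
      in if S = {} then \<infinity> else ereal (Min S))"

end

theory Submission
  imports Defs
begin

(* Write X = w(e) for the weight of the red edge e and let w0 = w(e := 0).
   Changing w(e) does not affect green weights, nor red weights of paths avoiding e, so the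
   threshold g_r is the same for w and w0; every path through e simply has its red weight
   shifted by X.  Hence Delta_e(r) = X + Y with Y = Delta_e(r) computed for w0, and Y is a
   measurable function of the weights of the edges other than e.  By assumption X is
   independent of those weights, so X and Y are independent, and by Fubini
     P(r < X + Y <= r + eps) = E_Y [ P(X in (r - Y, r - Y + eps]) ] <= phi * eps,
   since X has a density bounded by phi.
   The file first collects facts on paths and path weights, then represents g_r and Delta_e(r)
   as minima of finite families indexed by paths (which yields both the shift identity and
   measurability), then proves the probabilistic bound for a sum of independent random
   variables one of which has a bounded density, shows how the independence hypothesis of the
   theorem yields independence of X and Y, and finally combines everything. *)

section \<open>Paths and path weights\<close>

lemma path_distinct: "is_path E src tgt u v p \<Longrightarrow> distinct p"
  unfolding is_path_def by (auto simp: distinct_map)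

text \<open>A path uses every edge at most once, so there are only finitely many paths.\<close>
lemma finite_paths:
  assumes "finite E"
  shows "finite {p. is_path E src tgt u v p}"
proof (rule finite_subset[OF _ finite_lists_length_le[OF assms, of "card E"]])
  show "{p. is_path E src tgt u v p} \<subseteq> {xs. set xs \<subseteq> E \<and> length xs \<le> card E}"
  proof safe
    fix p assume p: "is_path E src tgt u v p"
    then have "set p \<subseteq> E" by (simp add: is_path_def)
    moreover have "length p = card (set p)"
      using path_distinct[OF p] by (simp add: distinct_card)
    ultimately show "length p \<le> card E" using card_mono[OF assms] by auto
    show "d \<in> set p \<Longrightarrow> d \<in> E" for d using \<open>set p \<subseteq> E\<close> by auto
  qed
qed

lemma green_w_upd_red: "col e = Red \<Longrightarrow> green_w col (w(e := c)) q = green_w col w q"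
  unfolding green_w_def by (intro arg_cong[where f = sum_list] map_cong) auto

lemma red_w_upd_notin: "e \<notin> set q \<Longrightarrow> red_w col (w(e := c)) q = red_w col w q"
  unfolding red_w_def by (intro arg_cong[where f = sum_list] map_cong) auto

lemma red_w_Cons: "red_w col w (a # q) = (if col a = Red then w a else 0) + red_w col w q"
  by (simp add: red_w_def)

lemma red_w_split:
  assumes "e \<in> set q" "distinct q" "col e = Red"
  shows "red_w col w q = w e + red_w col (w(e := 0)) q"
  using assms
proof (induction q)
  case (Cons a q)
  show ?case
  proof (cases "a = e")
    case True
    then have "e \<notin> set q" using Cons.prems by auto
    then show ?thesis
      using True Cons.prems red_w_upd_notin[of e q col w 0] by (simp only: red_w_Cons) simp
  next
    case False
    have IH: "red_w col w q = w e + red_w col (w(e := 0)) q"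
      by (rule Cons.IH) (use Cons.prems False in auto)
    have "(w(e := 0)) a = w a" using False by simp
    then show ?thesis by (simp only: red_w_Cons IH add.left_commute)
  qed
qed simp

lemma red_w_all_green: "\<forall>d\<in>set p. col d = Green \<Longrightarrow> red_w col w p = 0"
  unfolding red_w_def by (induction p) auto

lemma red_green_w_measurable:
  fixes w :: "'m \<Rightarrow> 'e \<Rightarrow> real"
  assumes "\<And>d. d \<in> set p \<Longrightarrow> (\<lambda>x. w x d) \<in> borel_measurable N"
  shows "(\<lambda>x. red_w col (w x) p) \<in> borel_measurable N"
    and "(\<lambda>x. green_w col (w x) p) \<in> borel_measurable N"
  using assms unfolding red_w_def green_w_def by (induction p) auto

text \<open>This turns the minima in the definitions of g_r and Delta_e(r) into minima of finite families
  indexed by a fixed set of paths.\<close>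
lemma Min_guarded:
  fixes h :: "'a \<Rightarrow> real"
  assumes "finite P"
  shows "Min (insert \<infinity> ((\<lambda>p. if C p then ereal (h p) else \<infinity>) ` P)) =
    (if {h p | p. p \<in> P \<and> C p} = {} then \<infinity> else ereal (Min {h p | p. p \<in> P \<and> C p}))"
proof (cases "{h p | p. p \<in> P \<and> C p} = {}")
  case True
  then have "(\<lambda>p. if C p then ereal (h p) else \<infinity>) ` P \<subseteq> {\<infinity>}" by auto
  then show ?thesis using True assms by (auto intro!: Min_eqI)
next
  case False
  define S where "S = {h p | p. p \<in> P \<and> C p}"
  have "finite S" unfolding S_def using assms by simp
  then have "Min S \<in> S" by (rule Min_in) (use False in \<open>simp add: S_def\<close>)
  then obtain p where "p \<in> P" "C p" "Min S = h p" unfolding S_def by blast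
  moreover have "Min S \<le> h p" if "p \<in> P" "C p" for p
    using \<open>finite S\<close> that by (auto simp: S_def intro: Min_le)
  ultimately have "Min (insert \<infinity> ((\<lambda>p. if C p then ereal (h p) else \<infinity>) ` P)) = ereal (Min S)"
    using assms by (intro Min_eqI) auto
  then show ?thesis using False by (simp add: S_def)
qed

text \<open>A version of the library's measurability of finite minima that allows an empty family.\<close>
lemma borel_measurable_Min_insert_infinity:
  fixes f :: "'i \<Rightarrow> 'm \<Rightarrow> ereal"
  assumes "finite I" "\<And>i. i \<in> I \<Longrightarrow> f i \<in> borel_measurable N"
  shows "(\<lambda>x. Min (insert \<infinity> ((\<lambda>i. f i x) ` I))) \<in> borel_measurable N"
proof (cases "I = {}")
  case False
  then have "(\<lambda>x. Min (insert \<infinity> ((\<lambda>i. f i x) ` I))) = (\<lambda>x. min \<infinity> (Min ((\<lambda>i. f i x) ` I)))"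
    using assms(1) by simp
  then show ?thesis using assms by (simp add: borel_measurable_Min)
qed simp

section \<open>The threshold g_r and Delta_e(r) as minima over fixed sets of paths\<close>

lemma g_val_as_Min:
  assumes "finite E"
    and admissible: "\<exists>p. is_path E src tgt u v p \<and> e \<notin> set p \<and> red_w col w p \<le> r"
  shows "ereal (g_val E src tgt col w u v e r) =
    Min (insert \<infinity> ((\<lambda>p. if red_w col w p \<le> r then ereal (green_w col w p) else \<infinity>)
                      ` {p. is_path E src tgt u v p \<and> e \<notin> set p}))"
proof -
  have "finite {p. is_path E src tgt u v p \<and> e \<notin> set p}"
    using finite_paths[OF assms(1)] by (rule finite_subset[rotated]) blast
  from Min_guarded[OF this, of "\<lambda>p. red_w col w p \<le> r" "green_w col w"] admissible
  show ?thesis by (auto simp: g_val_def)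
qed

lemma Delta_as_Min:
  assumes "finite E"
  shows "Delta E src tgt col w u v e r =
    Min (insert \<infinity> ((\<lambda>q. if green_w col w q < g_val E src tgt col w u v e r
                          then ereal (red_w col w q) else \<infinity>)
                      ` {q. is_path E src tgt u v q \<and> e \<in> set q}))"
proof -
  have "finite {q. is_path E src tgt u v q \<and> e \<in> set q}"
    using finite_paths[OF assms(1)] by (rule finite_subset[rotated]) blast
  from Min_guarded[OF this, of "\<lambda>q. green_w col w q < g_val E src tgt col w u v e r" "red_w col w"]
  show ?thesis by (simp add: Delta_def Let_def)
qed

text \<open>Setting the weight of the red edge e to any value leaves the threshold g_r unchanged,
  because the paths in its definition avoid e and e contributes no green weight.\<close>
lemma g_val_upd_red:
  assumes "col e = Red"
  shows "g_val E src tgt col (w(e := c)) u v e r = g_val E src tgt col w u v e r"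
  unfolding g_val_def using green_w_upd_red[of col e w c, OF assms] red_w_upd_notin by metis

lemma Delta_shift:
  assumes "finite E" "col e = Red"
  shows "Delta E src tgt col w u v e r = ereal (w e) + Delta E src tgt col (w(e := 0)) u v e r"
proof -
  define Q where "Q = {q. is_path E src tgt u v q \<and> e \<in> set q}"
  define g where "g = g_val E src tgt col w u v e r"
  define F where "F w' q = (if green_w col w' q < g then ereal (red_w col w' q) else \<infinity>)" for w' q
  define shift where "shift s = ereal (w e) + s" for s
  have "finite Q"
    using finite_paths[OF assms(1)] unfolding Q_def by (rule finite_subset[rotated]) blast
  have "F w q = shift (F (w(e := 0)) q)" if "q \<in> Q" for q
  proof -
    have "e \<in> set q" "distinct q" using that path_distinct unfolding Q_def by auto
    then have "red_w col w q = w e + red_w col (w(e := 0)) q" using assms(2) by (rule red_w_split)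
    then show ?thesis using green_w_upd_red[of col e w 0, OF assms(2)] by (simp add: F_def shift_def)
  qed
  then have "insert \<infinity> (F w ` Q) = shift ` insert \<infinity> (F (w(e := 0)) ` Q)"
    by (auto simp: shift_def image_image)
  moreover have "mono shift" unfolding shift_def by (rule monoI) (simp add: add_left_mono)
  ultimately have "Min (insert \<infinity> (F w ` Q)) = shift (Min (insert \<infinity> (F (w(e := 0)) ` Q)))"
    using \<open>finite Q\<close> by (simp add: mono_Min_commute)
  moreover have "Delta E src tgt col w' u v e r = Min (insert \<infinity> (F w' ` Q))"
    if "w' = w \<or> w' = w(e := 0)" for w'
    using that g_val_upd_red[of col e E src tgt w 0, OF assms(2)]
    by (auto simp only: Delta_as_Min[OF assms(1)] F_def[abs_def] Q_def g_def)
  ultimately show ?thesis by (simp add: shift_def)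
qed

text \<open>Delta_e(r) is a measurable function of the edge weights.  The hypotheses (a pure green
  path and r \<ge> 0) guarantee that g_r is a minimum over a nonempty set for every weighting.\<close>
lemma Delta_measurable:
  fixes w :: "'m \<Rightarrow> 'e \<Rightarrow> real"
  assumes "finite E" "col e = Red" "r \<ge> 0"
    and green: "\<exists>p. is_path E src tgt u v p \<and> (\<forall>d\<in>set p. col d = Green)"
    and w_meas: "\<And>d. d \<in> E \<Longrightarrow> (\<lambda>x. w x d) \<in> borel_measurable N"
  shows "(\<lambda>x. Delta E src tgt col (w x) u v e r) \<in> borel_measurable N"
proof -
  define P where "P = {p. is_path E src tgt u v p}"
  have "finite P" unfolding P_def by (rule finite_paths[OF assms(1)])
  have weights_meas: "(\<lambda>x. red_w col (w x) p) \<in> borel_measurable N"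
    "(\<lambda>x. green_w col (w x) p) \<in> borel_measurable N" if "p \<in> P" for p
    using that w_meas by (auto simp: P_def is_path_def intro!: red_green_w_measurable)
  define G where "G x = ereal (g_val E src tgt col (w x) u v e r)" for x
  have G_Min: "G x = Min (insert \<infinity> ((\<lambda>p. if red_w col (w x) p \<le> r
      then ereal (green_w col (w x) p) else \<infinity>) ` {p \<in> P. e \<notin> set p}))" for x
  proof -
    obtain p where p: "is_path E src tgt u v p" "\<forall>d\<in>set p. col d = Green" using green by blast
    then have "e \<notin> set p" "red_w col (w x) p \<le> r"
      using assms(2) red_w_all_green[OF p(2)] \<open>r \<ge> 0\<close> by auto
    with p(1) show ?thesis unfolding G_def P_def
      by (subst g_val_as_Min[OF assms(1)]) (auto intro!: arg_cong[where f = Min])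
  qed
  have "G \<in> borel_measurable N"
    unfolding G_Min using \<open>finite P\<close> weights_meas
    by (intro borel_measurable_Min_insert_infinity) auto
  moreover have "Delta E src tgt col (w x) u v e r = Min (insert \<infinity> ((\<lambda>q. if ereal (green_w col (w x) q) < G x
      then ereal (red_w col (w x) q) else \<infinity>) ` {q \<in> P. e \<in> set q}))" for x
    unfolding Delta_as_Min[OF assms(1)] G_def P_def by simp
  ultimately show ?thesis
    using \<open>finite P\<close> weights_meas by (simp only:) (intro borel_measurable_Min_insert_infinity; auto)
qed

section \<open>A sum of independent random variables, one with a bounded density\<close>

lemma (in prob_space) bounded_density_interval:
  fixes X :: "'a \<Rightarrow> real"
  assumes dens: "distributed M lborel X (\<lambda>t. ennreal (f t))"
    and f_meas: "f \<in> borel_measurable borel" and f_le: "\<And>t. f t \<le> \<phi>"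
    and "\<phi> \<ge> 0" "\<epsilon> \<ge> 0"
  shows "emeasure M (X -` {a <.. a + \<epsilon>} \<inter> space M) \<le> ennreal (\<phi> * \<epsilon>)"
proof -
  define I where "I = {a <.. a + \<epsilon>}"
  have I_meas: "I \<in> sets lborel" by (simp add: I_def)
  have "emeasure M (X -` I \<inter> space M) = emeasure (distr M lborel X) I"
    using distributed_measurable[OF dens] I_meas by (simp add: emeasure_distr)
  also have "\<dots> = (\<integral>\<^sup>+ t. ennreal (f t) * indicator I t \<partial>lborel)"
    using dens f_meas I_meas by (simp add: distributed_distr_eq_density emeasure_density)
  also have "\<dots> \<le> (\<integral>\<^sup>+ t. ennreal \<phi> * indicator I t \<partial>lborel)"
    using f_le by (intro nn_integral_mono) (auto split: split_indicator intro: ennreal_leI)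
  also have "\<dots> = ennreal \<phi> * emeasure lborel I"
    using I_meas by (rule nn_integral_cmult_indicator)
  also have "\<dots> = ennreal (\<phi> * \<epsilon>)"
    using assms(4,5) by (simp add: I_def ennreal_mult)
  finally show ?thesis unfolding I_def .
qed

text \<open>The same bound for the event that X + y lies in (r, r + eps], for a fixed extended real
  y: for finite y this is an interval of length eps for X, for infinite y the event is empty.\<close>
lemma (in prob_space) bounded_density_shifted_interval:
  fixes X :: "'a \<Rightarrow> real" and y :: ereal
  assumes dens: "distributed M lborel X (\<lambda>t. ennreal (f t))"
    and f_meas: "f \<in> borel_measurable borel" and f_le: "\<And>t. f t \<le> \<phi>"
    and "\<phi> \<ge> 0" "\<epsilon> \<ge> 0"
  shows "emeasure M {x \<in> space M. ereal r < ereal (X x) + y \<and> ereal (X x) + y \<le> ereal (r + \<epsilon>)}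
           \<le> ennreal (\<phi> * \<epsilon>)"
proof (cases "\<bar>y\<bar> = \<infinity>")
  case True
  have "\<not> (ereal r < a + y \<and> a + y \<le> ereal (r + \<epsilon>))" for a
    using True by (cases a; cases y) auto
  then have empty: "{x \<in> space M. ereal r < ereal (X x) + y \<and> ereal (X x) + y \<le> ereal (r + \<epsilon>)} = {}"
    by blast
  show ?thesis unfolding empty by simp
next
  case False
  then obtain c where c: "y = ereal c" by (cases y) auto
  have "emeasure M {x \<in> space M. ereal r < ereal (X x) + y \<and> ereal (X x) + y \<le> ereal (r + \<epsilon>)}
      \<le> emeasure M (X -` {r - c <.. r - c + \<epsilon>} \<inter> space M)"
    using c distributed_measurable[OF dens] by (intro emeasure_mono) auto
  also have "\<dots> \<le> ennreal (\<phi> * \<epsilon>)"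
    by (rule bounded_density_interval[OF dens f_meas f_le assms(4,5)])
  finally show ?thesis .
qed

text \<open>If X has a density bounded by phi and is independent of the extended-real random
  variable Y, then X + Y lies in the interval (r, r + eps] with probability at most phi * eps:
  by Fubini on the joint distribution, which is the product of the marginals, this reduces to
  the previous lemma for each fixed value y of Y.\<close>
lemma (in prob_space) indep_sum_interval:
  fixes X :: "'a \<Rightarrow> real" and Y :: "'a \<Rightarrow> ereal"
  assumes indep: "indep_var borel (\<lambda>x. ereal (X x)) borel Y"
    and dens: "distributed M lborel X (\<lambda>t. ennreal (f t))"
    and f_meas: "f \<in> borel_measurable borel" and f_le: "\<And>t. f t \<le> \<phi>"
    and "\<phi> \<ge> 0" "\<epsilon> \<ge> 0"
  shows "emeasure M {x \<in> space M. ereal r < ereal (X x) + Y x \<and> ereal (X x) + Y x \<le> ereal (r + \<epsilon>)}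
           \<le> ennreal (\<phi> * \<epsilon>)"
proof -
  let ?X = "\<lambda>x. ereal (X x)"
  let ?PX = "distr M borel ?X" and ?PY = "distr M borel Y"
  have X_meas: "?X \<in> borel_measurable M" and Y_meas: "Y \<in> borel_measurable M"
    using indep by (auto dest: indep_var_rv1 indep_var_rv2)
  interpret PX: prob_space ?PX using X_meas by (rule prob_space_distr)
  interpret PY: prob_space ?PY using Y_meas by (rule prob_space_distr)
  interpret P: pair_sigma_finite ?PX ?PY ..
  define A :: "(ereal \<times> ereal) set"
    where "A = {z \<in> space (borel \<Otimes>\<^sub>M borel). ereal r < fst z + snd z \<and> fst z + snd z \<le> ereal (r + \<epsilon>)}"
  have A_meas: "A \<in> sets (borel \<Otimes>\<^sub>M borel)" unfolding A_def by measurable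
  have slice: "emeasure ?PX ((\<lambda>a. (a, y)) -` A) \<le> ennreal (\<phi> * \<epsilon>)" for y
  proof -
    have "emeasure ?PX ((\<lambda>a. (a, y)) -` A)
        = emeasure M {x \<in> space M. ereal r < ereal (X x) + y \<and> ereal (X x) + y \<le> ereal (r + \<epsilon>)}"
      using X_meas sets_Pair2[OF A_meas]
      by (subst emeasure_distr) (auto simp: A_def space_pair_measure intro!: arg_cong[where f = "emeasure M"])
    also have "\<dots> \<le> ennreal (\<phi> * \<epsilon>)"
      by (rule bounded_density_shifted_interval[OF dens f_meas f_le assms(5,6)])
    finally show ?thesis .
  qed
  have "emeasure M {x \<in> space M. ereal r < ereal (X x) + Y x \<and> ereal (X x) + Y x \<le> ereal (r + \<epsilon>)}
      = emeasure (distr M (borel \<Otimes>\<^sub>M borel) (\<lambda>x. (?X x, Y x))) A"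
    using X_meas Y_meas A_meas
    by (subst emeasure_distr) (auto simp: A_def space_pair_measure intro!: arg_cong[where f = "emeasure M"])
  also have "\<dots> = emeasure (?PX \<Otimes>\<^sub>M ?PY) A"
    using indep[unfolded indep_var_distribution_eq] by simp
  also have "\<dots> = (\<integral>\<^sup>+ y. emeasure ?PX ((\<lambda>a. (a, y)) -` A) \<partial>?PY)"
    using A_meas by (simp add: P.emeasure_pair_measure_alt2)
  also have "\<dots> \<le> (\<integral>\<^sup>+ y. ennreal (\<phi> * \<epsilon>) \<partial>?PY)"
    by (intro nn_integral_mono slice)
  also have "\<dots> = ennreal (\<phi> * \<epsilon>)"
    using PY.emeasure_space_1 by simp
  finally show ?thesis .
qed

section \<open>Independence of a function of X from a variable measurable in the other weights\<close>

text \<open>If the events determined by X are independent of the sigma-algebra generated by G, then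
  any measurable function of X is independent of any random variable that is measurable with
  respect to that sigma-algebra.  (Both families are intersection-stable, so independence
  passes to the generated sigma-algebras.)\<close>
lemma (in prob_space) indep_var_of_indep_set:
  assumes indep: "indep_set {X -` A \<inter> space M | A. A \<in> sets S} (sigma_sets (space M) G)"
    and G: "G \<subseteq> Pow (space M)"
    and X: "X \<in> measurable M S" and g: "g \<in> measurable S T"
    and Y: "Y \<in> measurable M T" and Y_G: "Y \<in> measurable (sigma (space M) G) T"
  shows "indep_var T (\<lambda>x. g (X x)) T Y"
proof -
  let ?XS = "{X -` A \<inter> space M | A. A \<in> sets S}"
  have "Int_stable ?XS"
  proof (rule Int_stableI)
    fix a b assume "a \<in> ?XS" "b \<in> ?XS"
    then obtain A B where "A \<in> sets S" "B \<in> sets S" "a = X -` A \<inter> space M" "b = X -` B \<inter> space M"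
      by blast
    then show "a \<inter> b \<in> ?XS" by (intro CollectI exI[of _ "A \<inter> B"]) auto
  qed
  moreover have "Int_stable (sigma_sets (space M) G)"
    using sigma_algebra_sigma_sets[OF G] by (rule algebra.Int_stable[OF sigma_algebra.axioms(1)])
  ultimately have indep_sigma: "indep_set (sigma_sets (space M) ?XS) (sigma_sets (space M) G)"
    using indep_set_sigma_sets[OF indep] sigma_sets_sigma_sets_eq[OF G] by simp
  have "sigma_sets (space M) {(\<lambda>x. g (X x)) -` A \<inter> space M | A. A \<in> sets T} \<subseteq> sigma_sets (space M) ?XS"
  proof (rule sigma_sets_mono, safe)
    fix A assume "A \<in> sets T"
    then have "(\<lambda>x. g (X x)) -` A \<inter> space M = X -` (g -` A \<inter> space S) \<inter> space M"
      "g -` A \<inter> space S \<in> sets S"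
      using X g by (auto simp: measurable_def)
    then show "(\<lambda>x. g (X x)) -` A \<inter> space M \<in> sigma_sets (space M) ?XS" by blast
  qed
  moreover have "sigma_sets (space M) {Y -` A \<inter> space M | A. A \<in> sets T} \<subseteq> sigma_sets (space M) G"
  proof (rule sigma_sets_mono, safe)
    fix A assume "A \<in> sets T"
    then show "Y -` A \<inter> space M \<in> sigma_sets (space M) G"
      using measurable_sets[OF Y_G] G by simp
  qed
  ultimately have "indep_set (sigma_sets (space M) {(\<lambda>x. g (X x)) -` A \<inter> space M | A. A \<in> sets T})
                             (sigma_sets (space M) {Y -` A \<inter> space M | A. A \<in> sets T})"
    unfolding indep_set_def
    by (intro indep_sets_mono_sets[OF indep_sigma[unfolded indep_set_def]]) (auto split: bool.split)
  then show ?thesis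
    using X g Y by (simp add: indep_var_eq)
qed

theorem lemma4:
  fixes M :: "'m measure"
    and V :: "'v set" and E :: "'e set" and src tgt :: "'e \<Rightarrow> 'v"
    and col :: "'e \<Rightarrow> colour" and W :: "'m \<Rightarrow> 'e \<Rightarrow> real"
    and u v :: 'v and e :: 'e and f :: "real \<Rightarrow> real" and \<phi> r \<epsilon> :: real
  assumes "prob_space M"
    and "finite V" and "finite E"
    and "\<forall>d\<in>E. src d \<in> V \<and> tgt d \<in> V" and "u \<in> V" and "v \<in> V"
    and "\<exists>p. is_path E src tgt u v p \<and> (\<forall>d\<in>set p. col d = Green)"
    and "e \<in> E" and "col e = Red"
    and "\<forall>x\<in>space M. \<forall>d\<in>E. W x d > 0"
    and "\<forall>d\<in>E. (\<lambda>x. W x d) \<in> borel_measurable M"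
    and "\<phi> > 0"
    and "f \<in> borel_measurable borel"
    and "\<forall>t. 0 \<le> f t \<and> f t \<le> \<phi>"
    and "\<forall>t\<le>0. f t = 0"
    and "distributed M lborel (\<lambda>x. W x e) (\<lambda>t. ennreal (f t))"
    and "prob_space.indep_set M
           {(\<lambda>x. W x e) -` A \<inter> space M | A. A \<in> sets borel}
           (sigma_sets (space M)
              {(\<lambda>x. W x d) -` A \<inter> space M | d A. d \<in> E - {e} \<and> A \<in> sets borel})"
    and "r \<ge> 0" and "\<epsilon> \<ge> 0"
  shows "measure M {x \<in> space M. ereal r < Delta E src tgt col (W x) u v e r \<and>
                                 Delta E src tgt col (W x) u v e r \<le> ereal (r + \<epsilon>)}
           \<le> \<phi> * \<epsilon>"
proof -
  interpret prob_space M by fact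
  define G where "G = {(\<lambda>x. W x d) -` A \<inter> space M | d A. d \<in> E - {e} \<and> A \<in> sets borel}"
  define Y where "Y x = Delta E src tgt col ((W x)(e := 0)) u v e r" for x
  have G_Pow: "G \<subseteq> Pow (space M)" unfolding G_def by blast
  (* Y depends only on the weights of the edges other than e, hence is measurable for the
     sigma-algebra they generate. *)
  have W0_meas: "(\<lambda>x. ((W x)(e := 0)) d) \<in> borel_measurable N"
    if "\<And>d. d \<in> E - {e} \<Longrightarrow> (\<lambda>x. W x d) \<in> borel_measurable N" "d \<in> E" for N :: "'m measure" and d
    using that by (cases "d = e") auto
  have "(\<lambda>x. W x d) \<in> borel_measurable (sigma (space M) G)" if "d \<in> E - {e}" for d
    using that G_Pow by (intro measurableI) (auto simp: G_def)
  then have Y_G: "Y \<in> borel_measurable (sigma (space M) G)"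
    unfolding Y_def using W0_meas by (intro Delta_measurable[OF assms(3,9,18,7)]) blast
  have Y_M: "Y \<in> borel_measurable M"
    unfolding Y_def using W0_meas assms(11) by (intro Delta_measurable[OF assms(3,9,18,7)]) blast
  have "indep_var borel (\<lambda>x. ereal (W x e)) borel Y"
    using assms(17) G_Pow assms(8,11) Y_M Y_G unfolding G_def[symmetric]
    by (intro indep_var_of_indep_set[where S = borel and g = ereal]) auto
  from indep_sum_interval[OF this assms(16,13)] assms(12,14,19)
  have "emeasure M {x \<in> space M. ereal r < ereal (W x e) + Y x \<and> ereal (W x e) + Y x \<le> ereal (r + \<epsilon>)}
          \<le> ennreal (\<phi> * \<epsilon>)" by auto
  moreover have "Delta E src tgt col (W x) u v e r = ereal (W x e) + Y x" for x
    unfolding Y_def by (rule Delta_shift[of E col e, OF assms(3,9)])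
  ultimately show ?thesis
    using assms(12,19) by (simp add: emeasure_eq_measure)
qed

end
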